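(* Let $S_\omega$ be the group of all permutations of $\omega$ and let $\mathcal{E}$ be the coarse structure on $\omega$ with base $\{E_H: H\subseteq S_\omega \text{ finite}, \ \mathrm{id}\in H\}$, where $E_H=\{(x,y): y\in Hx\}$. Then $(\omega,\mathcal{E})$ is extremely normal (every infinite subset of $\omega$ is large), $\mathcal{E}$ is strictly contained in $\mathfrak{M}_\omega$, and $(\omega,\mathcal{E})$ is not maximal.
   Context: A ballean $(X,\mathcal{E})$ is a set with a coarse structure. $E[x]=\{y:(x,y)\in E\}$, $E[A]=\bigcup_{a\in A}E[a]$. $Y$ is bounded if $Y\subseteq E[x]$ for some $x$ and $E\in\mathcal{E}$. $A$ is large if $X=E[A]$ for some $E$. An unbounded ballean is extremely normal if every unbounded subset is large, and maximal if $X$ is bounded in every coarse structure strictly containing $\mathcal{E}$. $\mathfrak{M}_\omega$ is the coarse structure on $\omega$ with base $\{M_{\mathcal{P}}:\mathcal{P}\in\mathfrak{F}\}$, where $\mathfrak{F}$ is the family of coverings $\mathcal{P}$ of $\omega$ such that every $P\in\mathcal{P}$ is finite and for every $x\in\omega$ the set $\bigcup\{P'\in\mathcal{P}: x\in P'\}$ is finite, and $M_{\mathcal{P}}=\{(x,y): x,y\in P \text{ for some } P\in\mathcal{P}\}$. *)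

theory Defs
  imports Main
begin

definition coarse_structure :: "'a set \<Rightarrow> ('a \<times> 'a) set set \<Rightarrow> bool" where
  "coarse_structure X \<E> \<longleftrightarrow>
     Id_on X \<in> \<E> \<and>
     (\<forall>E\<in>\<E>. Id_on X \<subseteq> E \<and> E \<subseteq> X \<times> X) \<and>
     (\<forall>E\<in>\<E>. \<forall>F\<in>\<E>. E \<union> F \<in> \<E> \<and> E O F \<in> \<E>) \<and>
     (\<forall>E\<in>\<E>. E\<inverse> \<in> \<E>) \<and>
     (\<forall>E\<in>\<E>. \<forall>F. Id_on X \<subseteq> F \<and> F \<subseteq> E \<longrightarrow> F \<in> \<E>)"

definition coarse_with_base :: "'a set \<Rightarrow> ('a \<times> 'a) set set \<Rightarrow> ('a \<times> 'a) set set" where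
  "coarse_with_base X \<B> = {E. Id_on X \<subseteq> E \<and> (\<exists>B\<in>\<B>. E \<subseteq> B)}"

definition bounded_in :: "'a set \<Rightarrow> ('a \<times> 'a) set set \<Rightarrow> 'a set \<Rightarrow> bool" where
  "bounded_in X \<E> Y \<longleftrightarrow> (\<exists>x\<in>X. \<exists>E\<in>\<E>. Y \<subseteq> E `` {x})"

definition large_in :: "'a set \<Rightarrow> ('a \<times> 'a) set set \<Rightarrow> 'a set \<Rightarrow> bool" where
  "large_in X \<E> A \<longleftrightarrow> (\<exists>E\<in>\<E>. X = E `` A)"

definition extremely_normal :: "'a set \<Rightarrow> ('a \<times> 'a) set set \<Rightarrow> bool" where
  "extremely_normal X \<E> \<longleftrightarrow>
     \<not> bounded_in X \<E> X \<and> (\<forall>Y. Y \<subseteq> X \<and> \<not> bounded_in X \<E> Y \<longrightarrow> large_in X \<E> Y)"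

definition maximal_ballean :: "'a set \<Rightarrow> ('a \<times> 'a) set set \<Rightarrow> bool" where
  "maximal_ballean X \<E> \<longleftrightarrow>
     \<not> bounded_in X \<E> X \<and>
     (\<forall>\<E>'. coarse_structure X \<E>' \<and> \<E> \<subset> \<E>' \<longrightarrow> bounded_in X \<E>' X)"

definition admissible_coverings :: "nat set set set" where
  "admissible_coverings = {\<P>. \<Union>\<P> = UNIV \<and> (\<forall>P\<in>\<P>. finite P) \<and>
       (\<forall>x. finite (\<Union>{P'\<in>\<P>. x \<in> P'}))}"

definition M_cov :: "nat set set \<Rightarrow> (nat \<times> nat) set" where
  "M_cov \<P> = {(x, y). \<exists>P\<in>\<P>. x \<in> P \<and> y \<in> P}"

definition M_omega :: "(nat \<times> nat) set set" where
  "M_omega = coarse_with_base UNIV (M_cov ` admissible_coverings)"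

definition E_perm :: "(nat \<Rightarrow> nat) set \<Rightarrow> (nat \<times> nat) set" where
  "E_perm H = {(x, y). \<exists>h\<in>H. y = h x}"

definition perm_coarse :: "(nat \<times> nat) set set" where
  "perm_coarse = coarse_with_base UNIV
     {E_perm H | H. finite H \<and> H \<subseteq> {\<sigma>. bij \<sigma>} \<and> id \<in> H}"

end

theory Submission
  imports Defs "HOL-Library.Nat_Bijection" "HOL-Library.Countable_Set" "HOL-Combinatorics.Transposition"
begin

text \<open>An entourage of the permutation ballean is contained in some \<open>E_H\<close>, so every ball
\<open>E``{x} \<subseteq> H x\<close> has at most \<open>|H|\<close> points: the balls are finite and of uniformly bounded size.
Finiteness of balls places \<open>perm_coarse\<close> inside the coarse structure of all locally finite
entourages, which is contained in \<open>M_omega\<close> (cover \<open>\<omega>\<close> by the balls) and in which \<open>\<omega>\<close> is still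
unbounded. The uniform bound fails for the equivalence whose classes are the antidiagonals of the
Cantor pairing, classes of unbounded finite size; this relation lies in both larger structures,
giving the strict inclusion and non-maximality. Extreme normality: finite sets are bounded
(use transpositions), and for infinite \<open>Y\<close> there is a permutation mapping a subset of \<open>Y\<close>
onto the complement of \<open>Y\<close>, so \<open>E_{id,g} `` Y = \<omega>\<close>.\<close>

lemma Id_on_UNIV [simp]: "Id_on UNIV = Id"
  by auto

lemma mem_coarse_with_base:
  "E \<in> coarse_with_base X \<B> \<longleftrightarrow> Id_on X \<subseteq> E \<and> (\<exists>B\<in>\<B>. E \<subseteq> B)"
  unfolding coarse_with_base_def by blast

lemma coarse_structure_coarse_with_base:
  assumes base_Id: "\<exists>B\<in>\<B>. Id_on X \<subseteq> B"
    and base_sub: "\<And>B. B \<in> \<B> \<Longrightarrow> B \<subseteq> X \<times> X"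
    and base_Un: "\<And>B C. B \<in> \<B> \<Longrightarrow> C \<in> \<B> \<Longrightarrow> \<exists>D\<in>\<B>. B \<union> C \<subseteq> D"
    and base_relcomp: "\<And>B C. B \<in> \<B> \<Longrightarrow> C \<in> \<B> \<Longrightarrow> \<exists>D\<in>\<B>. B O C \<subseteq> D"
    and base_converse: "\<And>B. B \<in> \<B> \<Longrightarrow> \<exists>D\<in>\<B>. B\<inverse> \<subseteq> D"
  shows "coarse_structure X (coarse_with_base X \<B>)"
  unfolding coarse_structure_def
proof (intro conjI ballI allI impI)
  show "Id_on X \<in> coarse_with_base X \<B>"
    using base_Id by (simp add: mem_coarse_with_base)
next
  fix E assume "E \<in> coarse_with_base X \<B>"
  then show "Id_on X \<subseteq> E" and "E \<subseteq> X \<times> X"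
    using base_sub by (auto simp: mem_coarse_with_base)
next
  fix E F assume "E \<in> coarse_with_base X \<B>" and "F \<in> coarse_with_base X \<B>"
  then obtain B C where E: "Id_on X \<subseteq> E" "B \<in> \<B>" "E \<subseteq> B"
    and F: "Id_on X \<subseteq> F" "C \<in> \<B>" "F \<subseteq> C"
    by (auto simp: mem_coarse_with_base)
  obtain D D' where "D \<in> \<B>" "B \<union> C \<subseteq> D" "D' \<in> \<B>" "B O C \<subseteq> D'"
    using base_Un[OF E(2) F(2)] base_relcomp[OF E(2) F(2)] by blast
  moreover have "Id_on X \<subseteq> E O F" using E(1) F(1) by auto
  moreover have "E O F \<subseteq> B O C" using E(3) F(3) by (rule relcomp_mono)
  ultimately have "Id_on X \<subseteq> E \<union> F \<and> E \<union> F \<subseteq> D" and "Id_on X \<subseteq> E O F \<and> E O F \<subseteq> D'"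
    using E F by auto
  then show "E \<union> F \<in> coarse_with_base X \<B>" and "E O F \<in> coarse_with_base X \<B>"
    unfolding mem_coarse_with_base using \<open>D \<in> \<B>\<close> \<open>D' \<in> \<B>\<close> by auto
next
  fix E assume "E \<in> coarse_with_base X \<B>"
  then obtain B where "Id_on X \<subseteq> E" "B \<in> \<B>" "E \<subseteq> B"
    by (auto simp: mem_coarse_with_base)
  moreover obtain D where "D \<in> \<B>" "B\<inverse> \<subseteq> D" using base_converse \<open>B \<in> \<B>\<close> by blast
  ultimately show "E\<inverse> \<in> coarse_with_base X \<B>"
    unfolding mem_coarse_with_base by blast
next
  fix E F assume "E \<in> coarse_with_base X \<B>" and "Id_on X \<subseteq> F \<and> F \<subseteq> E"
  then show "F \<in> coarse_with_base X \<B>"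
    by (meson mem_coarse_with_base order_trans)
qed

lemma bounded_in_mono: "bounded_in X \<E> Y \<Longrightarrow> \<E> \<subseteq> \<E>' \<Longrightarrow> bounded_in X \<E>' Y"
  unfolding bounded_in_def by blast

subsection \<open>Locally finite entourages\<close>

definition locally_finite_entourages :: "('a \<times> 'a) set set" where
  "locally_finite_entourages = {E. Id \<subseteq> E \<and> (\<forall>x. finite (E `` {x}) \<and> finite (E\<inverse> `` {x}))}"

lemma finite_Image_if_finite_balls:
  "finite A \<Longrightarrow> (\<And>x. finite (R `` {x})) \<Longrightarrow> finite (R `` A)"
  unfolding Image_eq_UN[of R A] by blast

lemma coarse_with_base_locally_finite_entourages:
  "coarse_with_base UNIV locally_finite_entourages = locally_finite_entourages"
proof (intro equalityI subsetI)
  fix E :: "('a \<times> 'a) set"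
  assume "E \<in> coarse_with_base UNIV locally_finite_entourages"
  then obtain B where "Id \<subseteq> E" "E \<subseteq> B" "B \<in> locally_finite_entourages"
    unfolding mem_coarse_with_base by auto
  moreover have "finite (E `` {x})" and "finite (E\<inverse> `` {x})" for x
  proof -
    have "finite (B `` {x})" and "finite (B\<inverse> `` {x})"
      using \<open>B \<in> locally_finite_entourages\<close> unfolding locally_finite_entourages_def by auto
    moreover have "E `` {x} \<subseteq> B `` {x}" and "E\<inverse> `` {x} \<subseteq> B\<inverse> `` {x}"
      using \<open>E \<subseteq> B\<close> by auto
    ultimately show "finite (E `` {x})" and "finite (E\<inverse> `` {x})"
      by (auto intro: finite_subset)
  qed
  ultimately show "E \<in> locally_finite_entourages"
    unfolding locally_finite_entourages_def by auto
qed (auto simp: mem_coarse_with_base locally_finite_entourages_def)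

lemma coarse_structure_locally_finite_entourages:
  "coarse_structure UNIV (locally_finite_entourages :: ('a \<times> 'a) set set)"
proof -
  have "coarse_structure UNIV (coarse_with_base UNIV (locally_finite_entourages :: ('a \<times> 'a) set set))"
  proof (rule coarse_structure_coarse_with_base)
    fix E F :: "('a \<times> 'a) set"
    assume "E \<in> locally_finite_entourages" "F \<in> locally_finite_entourages"
    then have Id: "Id \<subseteq> E" "Id \<subseteq> F"
      and fin: "\<And>x. finite (E `` {x})" "\<And>x. finite (F `` {x})"
        "\<And>x. finite (E\<inverse> `` {x})" "\<And>x. finite (F\<inverse> `` {x})"
      unfolding locally_finite_entourages_def by auto
    have "finite ((E \<union> F) `` {x})" and "finite ((E \<union> F)\<inverse> `` {x})" for x
      by (simp_all add: converse_Un Un_Image fin)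
    moreover have "Id \<subseteq> E \<union> F" using Id by auto
    ultimately have "E \<union> F \<in> locally_finite_entourages"
      unfolding locally_finite_entourages_def by blast
    have "finite ((E O F) `` {x})" and "finite ((E O F)\<inverse> `` {x})" for x
      unfolding converse_relcomp relcomp_Image
      by (simp_all add: finite_Image_if_finite_balls fin)
    moreover have "Id \<subseteq> E O F" using Id by auto
    ultimately have "E O F \<in> locally_finite_entourages"
      unfolding locally_finite_entourages_def by blast
    with \<open>E \<union> F \<in> locally_finite_entourages\<close> show "\<exists>D\<in>locally_finite_entourages. E \<union> F \<subseteq> D"
      and "\<exists>D\<in>locally_finite_entourages. E O F \<subseteq> D"
      by blast+
  next
    fix E :: "('a \<times> 'a) set"
    assume "E \<in> locally_finite_entourages"
    then have "E\<inverse> \<in> locally_finite_entourages"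
      unfolding locally_finite_entourages_def by auto
    then show "\<exists>D\<in>locally_finite_entourages. E\<inverse> \<subseteq> D" by blast
  qed (auto simp: locally_finite_entourages_def)
  then show ?thesis
    by (simp only: coarse_with_base_locally_finite_entourages)
qed

lemma not_bounded_locally_finite_entourages:
  assumes "infinite (UNIV :: 'a set)"
  shows "\<not> bounded_in UNIV (locally_finite_entourages :: ('a \<times> 'a) set set) UNIV"
  using assms unfolding bounded_in_def locally_finite_entourages_def
  by (auto dest: finite_subset)

lemma locally_finite_entourages_subset_M_omega: "locally_finite_entourages \<subseteq> M_omega"
proof
  fix E :: "(nat \<times> nat) set"
  assume "E \<in> locally_finite_entourages"
  then have refl: "Id \<subseteq> E" and fin: "\<And>x. finite (E `` {x})" "\<And>x. finite (E\<inverse> `` {x})"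
    unfolding locally_finite_entourages_def by auto
  define \<P> where "\<P> = range (\<lambda>x. E `` {x})"
  have "x \<in> E `` {x}" for x using refl by auto
  then have "\<Union>\<P> = UNIV" unfolding \<P>_def by blast
  moreover have "{P \<in> \<P>. z \<in> P} = (\<lambda>x. E `` {x}) ` (E\<inverse> `` {z})" for z
    unfolding \<P>_def by blast
  then have "finite (\<Union>{P \<in> \<P>. z \<in> P})" for z
    using fin by simp
  ultimately have "\<P> \<in> admissible_coverings"
    unfolding admissible_coverings_def \<P>_def using fin by auto
  moreover have "E \<subseteq> M_cov \<P>"
    unfolding M_cov_def \<P>_def using refl by blast
  ultimately show "E \<in> M_omega"
    unfolding M_omega_def mem_coarse_with_base using refl by auto
qed

lemma fibre_relation_in_locally_finite_entourages:
  assumes "\<And>n. finite (f -` {n})"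
  shows "{(x, y). f x = f y} \<in> locally_finite_entourages"
proof -
  have "{(x, y). f x = f y} `` {z} = f -` {f z}" for z by auto
  moreover have "{(x, y). f x = f y}\<inverse> = {(x, y). f x = f y}" by auto
  ultimately show ?thesis
    unfolding locally_finite_entourages_def using assms by auto
qed

subsection \<open>The permutation ballean\<close>

definition perm_generators :: "(nat \<Rightarrow> nat) set set" where
  "perm_generators = {H. finite H \<and> H \<subseteq> {\<sigma>. bij \<sigma>} \<and> id \<in> H}"

lemma perm_coarse_eq: "perm_coarse = coarse_with_base UNIV (E_perm ` perm_generators)"
  unfolding perm_coarse_def perm_generators_def by (simp add: setcompr_eq_image)

lemma mem_perm_coarse: "E \<in> perm_coarse \<longleftrightarrow> Id \<subseteq> E \<and> (\<exists>H\<in>perm_generators. E \<subseteq> E_perm H)"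
  by (auto simp: perm_coarse_eq mem_coarse_with_base)

lemma E_perm_Image: "E_perm H `` {x} = (\<lambda>h. h x) ` H"
  unfolding E_perm_def by auto

lemma Id_subset_E_perm: "id \<in> H \<Longrightarrow> Id \<subseteq> E_perm H"
  unfolding E_perm_def by (auto intro!: bexI[where x = id])

lemma E_perm_Un: "E_perm H \<union> E_perm K = E_perm (H \<union> K)"
  unfolding E_perm_def by blast

lemma E_perm_relcomp: "E_perm H O E_perm K = E_perm ((\<lambda>(h, k). k \<circ> h) ` (H \<times> K))"
proof (intro equalityI subsetI)
  fix p assume "p \<in> E_perm H O E_perm K"
  then obtain x h k where "p = (x, (k \<circ> h) x)" "h \<in> H" "k \<in> K"
    unfolding E_perm_def by auto
  moreover from this have "k \<circ> h \<in> (\<lambda>(h, k). k \<circ> h) ` (H \<times> K)"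
    by (intro rev_image_eqI[of "(h, k)"]) simp_all
  ultimately show "p \<in> E_perm ((\<lambda>(h, k). k \<circ> h) ` (H \<times> K))"
    unfolding E_perm_def by blast
next
  fix p assume "p \<in> E_perm ((\<lambda>(h, k). k \<circ> h) ` (H \<times> K))"
  then obtain x h k where "p = (x, k (h x))" "h \<in> H" "k \<in> K"
    unfolding E_perm_def by auto
  then show "p \<in> E_perm H O E_perm K"
    unfolding E_perm_def by blast
qed

lemma converse_E_perm:
  assumes "H \<subseteq> {\<sigma>. bij \<sigma>}"
  shows "(E_perm H)\<inverse> = E_perm (inv ` H)"
proof (intro equalityI subsetI)
  fix p assume "p \<in> (E_perm H)\<inverse>"
  then obtain x h where p: "p = (h x, x)" and "h \<in> H"
    unfolding E_perm_def by auto
  with assms have "inv h \<in> inv ` H" and "x = inv h (h x)"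
    by (auto simp: bij_is_inj)
  then show "p \<in> E_perm (inv ` H)"
    unfolding E_perm_def p by blast
next
  fix p assume "p \<in> E_perm (inv ` H)"
  then obtain y h where p: "p = (y, inv h y)" and "h \<in> H"
    unfolding E_perm_def by auto
  with assms have "y = h (inv h y)"
    by (auto simp: bij_is_surj surj_f_inv_f)
  with \<open>h \<in> H\<close> show "p \<in> (E_perm H)\<inverse>"
    unfolding E_perm_def p by blast
qed

lemma E_perm_in_perm_coarse: "H \<in> perm_generators \<Longrightarrow> E_perm H \<in> perm_coarse"
  using Id_subset_E_perm unfolding mem_perm_coarse perm_generators_def by blast

lemma coarse_structure_perm_coarse: "coarse_structure UNIV perm_coarse"
  unfolding perm_coarse_eq
proof (rule coarse_structure_coarse_with_base)
  have "{id} \<in> perm_generators" unfolding perm_generators_def by simp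
  then show "\<exists>B\<in>E_perm ` perm_generators. Id_on UNIV \<subseteq> B"
    using Id_subset_E_perm by auto
next
  fix B C assume "B \<in> E_perm ` perm_generators" "C \<in> E_perm ` perm_generators"
  then obtain H K where B: "B = E_perm H" and C: "C = E_perm K"
    and "H \<in> perm_generators" "K \<in> perm_generators" by blast
  then have gen: "finite H" "finite K" "H \<subseteq> {\<sigma>. bij \<sigma>}" "K \<subseteq> {\<sigma>. bij \<sigma>}" "id \<in> H" "id \<in> K"
    unfolding perm_generators_def by auto
  have "H \<union> K \<in> perm_generators"
    using gen unfolding perm_generators_def by auto
  then show "\<exists>D\<in>E_perm ` perm_generators. B \<union> C \<subseteq> D"
    unfolding B C E_perm_Un by blast
  have "(\<lambda>(h, k). k \<circ> h) ` (H \<times> K) \<in> perm_generators"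
    using gen unfolding perm_generators_def
    by (auto intro: bij_comp intro!: image_eqI[where x = "(id, id)"])
  then show "\<exists>D\<in>E_perm ` perm_generators. B O C \<subseteq> D"
    unfolding B C E_perm_relcomp by blast
next
  fix B assume "B \<in> E_perm ` perm_generators"
  then obtain H where B: "B = E_perm H" and H: "H \<in> perm_generators" by blast
  then have "inv ` H \<in> perm_generators" and "H \<subseteq> {\<sigma>. bij \<sigma>}"
    unfolding perm_generators_def by (auto intro: bij_imp_bij_inv image_eqI[where x = id])
  then show "\<exists>D\<in>E_perm ` perm_generators. B\<inverse> \<subseteq> D"
    unfolding B by (auto simp: converse_E_perm)
qed auto

lemma perm_coarse_subset_locally_finite_entourages: "perm_coarse \<subseteq> locally_finite_entourages"
proof
  fix E assume "E \<in> perm_coarse"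
  then obtain H where "Id \<subseteq> E" "E \<subseteq> E_perm H" "finite H" "H \<subseteq> {\<sigma>. bij \<sigma>}"
    unfolding mem_perm_coarse perm_generators_def by blast
  moreover from this have "E\<inverse> \<subseteq> E_perm (inv ` H)"
    by (auto simp flip: converse_E_perm)
  ultimately have "E `` {x} \<subseteq> (\<lambda>h. h x) ` H" and "E\<inverse> `` {x} \<subseteq> (\<lambda>h. h x) ` inv ` H" for x
    by (auto simp flip: E_perm_Image)
  then have "finite (E `` {x})" and "finite (E\<inverse> `` {x})" for x
    using \<open>finite H\<close> by (meson finite_imageI finite_subset)+
  with \<open>Id \<subseteq> E\<close> show "E \<in> locally_finite_entourages"
    unfolding locally_finite_entourages_def by blast
qed

lemma perm_coarse_balls_card_bounded: "E \<in> perm_coarse \<Longrightarrow> \<exists>n. \<forall>x. card (E `` {x}) \<le> n"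
proof -
  assume "E \<in> perm_coarse"
  then obtain H where "E \<subseteq> E_perm H" "finite H"
    unfolding mem_perm_coarse perm_generators_def by blast
  then have "card (E `` {x}) \<le> card H" for x
    using card_mono[OF _ Image_mono, of "E_perm H" "{x}" E "{x}"] card_image_le[of H "\<lambda>h. h x"]
    by (simp add: E_perm_Image)
  then show ?thesis by blast
qed

lemma fibre_relation_notin_perm_coarse:
  fixes f :: "nat \<Rightarrow> 'b"
  assumes "\<And>m. \<exists>n. m < card (f -` {n})"
  shows "{(x, y). f x = f y} \<notin> perm_coarse"
proof
  assume "{(x, y). f x = f y} \<in> perm_coarse"
  then obtain m where m: "\<And>x. card ({(x, y). f x = f y} `` {x}) \<le> m"
    using perm_coarse_balls_card_bounded by blast
  obtain n where n: "m < card (f -` {n})" using assms by blast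
  then obtain x where "f x = n" by (metis card.empty ex_in_conv not_less0 vimage_singleton_eq)
  moreover have "{(x, y). f x = f y} `` {x} = f -` {f x}" by auto
  ultimately show False using m[of x] n by simp
qed

subsection \<open>Extreme normality\<close>

lemma bounded_perm_coarse_if_finite:
  assumes "finite Y"
  shows "bounded_in UNIV perm_coarse Y"
proof (cases "Y = {}")
  case True
  have "Id \<in> perm_coarse"
    using coarse_structure_perm_coarse unfolding coarse_structure_def by simp
  then show ?thesis unfolding bounded_in_def True by blast
next
  case False
  then obtain y where "y \<in> Y" by blast
  let ?H = "insert id (Transposition.transpose y ` Y)"
  have "?H \<in> perm_generators"
    unfolding perm_generators_def using assms by auto
  moreover have "Y \<subseteq> E_perm ?H `` {y}"
  proof
    fix z assume "z \<in> Y"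
    then have "Transposition.transpose y z \<in> ?H" and "Transposition.transpose y z y = z" by auto
    then show "z \<in> E_perm ?H `` {y}" unfolding E_perm_Image by (metis rev_image_eqI)
  qed
  ultimately show ?thesis
    unfolding bounded_in_def by (blast intro: E_perm_in_perm_coarse)
qed

lemma bij_betw_disjoint_extends_to_bij:
  assumes "A \<inter> B = {}" and "bij_betw b A B"
  obtains g where "bij g" and "g ` A = B"
proof
  define g where "g x = (if x \<in> A then b x else if x \<in> B then inv_into A b x else x)" for x
  have "g (g x) = x" for x
    using assms inv_into_into[of x b A] f_inv_into_f[of x b A]
    unfolding g_def bij_betw_def by (auto simp: disjoint_iff)
  then have involution: "g \<circ> g = id" by (simp add: fun_eq_iff)
  show "bij g" by (rule o_bij[OF involution involution])
  show "g ` A = B"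
    using assms(2) unfolding g_def bij_betw_def by auto
qed

lemma ex_bij_Compl_subset_image:
  fixes Y :: "'a::countable set"
  assumes "infinite Y"
  obtains g where "bij g" and "- Y \<subseteq> g ` Y"
proof -
  obtain A and b :: "'a \<Rightarrow> 'a" where "A \<subseteq> Y" and b: "bij_betw b A (- Y)"
  proof (cases "finite (- Y)")
    case True
    obtain A where "finite A" "card A = card (- Y)" "A \<subseteq> Y"
      using infinite_arbitrarily_large[OF assms] by blast
    with True show ?thesis using finite_same_card_bij that by blast
  next
    case False
    obtain e1 :: "'a \<Rightarrow> nat" where "bij_betw e1 Y UNIV"
      using countableE_infinite[of Y] assms by blast
    moreover obtain e2 :: "'a \<Rightarrow> nat" where "bij_betw e2 (- Y) UNIV"
      using countableE_infinite[of "- Y"] False by blast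
    ultimately have "bij_betw (inv_into (- Y) e2 \<circ> e1) Y (- Y)"
      by (blast intro: bij_betw_trans bij_betw_inv_into)
    then show ?thesis using that by blast
  qed
  moreover have "A \<inter> - Y = {}" using \<open>A \<subseteq> Y\<close> by blast
  ultimately obtain g where "bij g" "g ` A = - Y"
    using bij_betw_disjoint_extends_to_bij by blast
  then show ?thesis using that image_mono[OF \<open>A \<subseteq> Y\<close>, of g] by auto
qed

lemma large_perm_coarse_if_infinite:
  assumes "infinite Y"
  shows "large_in UNIV perm_coarse Y"
proof -
  obtain g where "bij g" and g: "- Y \<subseteq> g ` Y"
    using ex_bij_Compl_subset_image[OF assms] by blast
  then have "{id, g} \<in> perm_generators"
    unfolding perm_generators_def by auto
  moreover have "E_perm {id, g} `` Y = UNIV"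
    using g unfolding E_perm_def by auto
  ultimately show ?thesis
    unfolding large_in_def using E_perm_in_perm_coarse by blast
qed

lemma extremely_normal_perm_coarse: "extremely_normal UNIV perm_coarse"
proof -
  have "\<not> bounded_in UNIV perm_coarse (UNIV :: nat set)"
    using not_bounded_locally_finite_entourages[OF infinite_UNIV_nat]
      perm_coarse_subset_locally_finite_entourages bounded_in_mono by blast
  then show ?thesis
    unfolding extremely_normal_def
    using bounded_perm_coarse_if_finite large_perm_coarse_if_infinite by blast
qed

subsection \<open>A locally finite entourage outside the permutation ballean\<close>

definition cantor_antidiagonal :: "nat \<Rightarrow> nat" where
  "cantor_antidiagonal k = fst (prod_decode k) + snd (prod_decode k)"

lemma cantor_antidiagonal_vimage:
  "cantor_antidiagonal -` {n} = (\<lambda>a. prod_encode (a, n - a)) ` {..n}"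
proof (intro equalityI subsetI)
  fix k assume "k \<in> cantor_antidiagonal -` {n}"
  moreover obtain a b where "prod_decode k = (a, b)" by fastforce
  moreover have "k = prod_encode (prod_decode k)" by simp
  ultimately show "k \<in> (\<lambda>a. prod_encode (a, n - a)) ` {..n}"
    unfolding cantor_antidiagonal_def by force
qed (auto simp: cantor_antidiagonal_def)

lemma card_cantor_antidiagonal_vimage: "card (cantor_antidiagonal -` {n}) = Suc n"
proof -
  have "inj_on (\<lambda>a. prod_encode (a, n - a)) {..n}"
    by (auto intro!: inj_onI dest: arg_cong[where f = prod_decode])
  then show ?thesis
    unfolding cantor_antidiagonal_vimage by (simp add: card_image)
qed

lemma ex_locally_finite_entourage_notin_perm_coarse:
  "\<exists>W\<in>locally_finite_entourages. W \<notin> perm_coarse"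
proof
  let ?W = "{(x, y). cantor_antidiagonal x = cantor_antidiagonal y}"
  show "?W \<in> locally_finite_entourages"
    by (rule fibre_relation_in_locally_finite_entourages) (simp add: cantor_antidiagonal_vimage)
  show "?W \<notin> perm_coarse"
    by (rule fibre_relation_notin_perm_coarse) (auto simp: card_cantor_antidiagonal_vimage)
qed

theorem mainTheorem8:
  shows "coarse_structure (UNIV :: nat set) perm_coarse \<and>
         extremely_normal (UNIV :: nat set) perm_coarse \<and>
         perm_coarse \<subset> M_omega \<and>
         \<not> maximal_ballean (UNIV :: nat set) perm_coarse"
proof -
  have strict: "perm_coarse \<subset> locally_finite_entourages"
    using perm_coarse_subset_locally_finite_entourages
      ex_locally_finite_entourage_notin_perm_coarse by blast
  then have "perm_coarse \<subset> M_omega"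
    using locally_finite_entourages_subset_M_omega by blast
  moreover have "\<not> maximal_ballean UNIV perm_coarse"
    unfolding maximal_ballean_def
    using coarse_structure_locally_finite_entourages strict
      not_bounded_locally_finite_entourages[OF infinite_UNIV_nat] by blast
  ultimately show ?thesis
    using coarse_structure_perm_coarse extremely_normal_perm_coarse by blast
qed

end
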